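(* Let $\lambda_1,\lambda_2$ be as in the context, $K\in(-1,1)$, and let $b:\mathbb{R}\to\mathbb{R}$ be the solution of $b'(v)=\sqrt{\lambda_1^2-K(\lambda_1^2\cos^2 b(v)+\lambda_2^2\sin^2 b(v))}$, $b(0)=0$. Define $g:\mathbb{C}\to\mathbb{C}$ by $g(u+iv)=e^{-\lambda_1u}e^{ib(v)}$. Then $g$ satisfies $$g_{z\bar z}=\frac{2\left[\lambda_1^2(g+\bar g)-\lambda_2^2(g-\bar g)\right]}{\lambda_1^2(g+\bar g)^2-\lambda_2^2(g-\bar g)^2}\,g_zg_{\bar z},$$ and its Hopf differential is $Q=\frac{K}{16}\,dz^2$.
   Context: Either $\lambda_1>\lambda_2>0$ or $\lambda_1=\lambda_2=1$. Here $z=u+iv$, $g_z=\frac12(g_u-ig_v)$, $g_{\bar z}=\frac12(g_u+ig_v)$. The Hopf differential associated to $g$ is the quadratic differential $Q=\dfrac{g_z\bar g_z}{\lambda_1^2(g+\bar g)^2-\lambda_2^2(g-\bar g)^2}\,dz^2$, where $\bar g_z=\partial_z(\bar g)$. *)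

theory Defs
  imports "HOL-Analysis.Analysis"
begin

definition d_u :: "(complex \<Rightarrow> complex) \<Rightarrow> complex \<Rightarrow> complex" where
  "d_u f z = vector_derivative (\<lambda>t::real. f (z + complex_of_real t)) (at 0)"

definition d_v :: "(complex \<Rightarrow> complex) \<Rightarrow> complex \<Rightarrow> complex" where
  "d_v f z = vector_derivative (\<lambda>t::real. f (z + \<i> * complex_of_real t)) (at 0)"

definition d_z :: "(complex \<Rightarrow> complex) \<Rightarrow> complex \<Rightarrow> complex" where
  "d_z f z = (d_u f z - \<i> * d_v f z) / 2"

definition d_zbar :: "(complex \<Rightarrow> complex) \<Rightarrow> complex \<Rightarrow> complex" where
  "d_zbar f z = (d_u f z + \<i> * d_v f z) / 2"

definition hopf_coeff :: "real \<Rightarrow> real \<Rightarrow> (complex \<Rightarrow> complex) \<Rightarrow> complex \<Rightarrow> complex" where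
  "hopf_coeff l1 l2 g z =
     d_z g z * d_z (\<lambda>w. cnj (g w)) z /
     ((complex_of_real l1)\<^sup>2 * (g z + cnj (g z))\<^sup>2 - (complex_of_real l2)\<^sup>2 * (g z - cnj (g z))\<^sup>2)"

end

theory Submission
  imports Defs
begin

(* Functions e^(-l u) q(v) are closed under the Wirtinger derivatives,
   which act on the profile q as q |-> -(l q + i q')/2 and q |-> (i q' - l q)/2.  For
   q = e^(i b) with B = b' this gives
     g_z = e^(-l1 u) (B - l1)/2 e^(i b),   g_zbar = - e^(-l1 u) (B + l1)/2 e^(i b),
     g_(z zbar) = e^(-l1 u) (l1^2 - B^2 + i B')/4 e^(i b).
   The ODE says l1^2 - B^2 = K W(b) with W = l1^2 cos^2 + l2^2 sin^2, and differentiating it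
   gives B' = K (l1^2 - l2^2) sin b cos b.  Since the denominator of the Hopf differential is
   4 e^(-2 l1 u) W(b), both claims reduce to algebraic identities at each point. *)

definition exp_profile :: "real \<Rightarrow> (real \<Rightarrow> complex) \<Rightarrow> complex \<Rightarrow> complex" where
  "exp_profile l q z = of_real (exp (- l * Re z)) * q (Im z)"

lemma d_u_exp_profile: "d_u (exp_profile l q) z = - of_real l * exp_profile l q z"
proof -
  have "((\<lambda>t::real. of_real (exp (- l * (Re z + t))) * q (Im z)) has_vector_derivative
        of_real (exp (- l * (Re z + 0)) * (- l * (0 + 1))) * q (Im z)) (at 0)"
    by (intro derivative_eq_intros) auto
  then show ?thesis unfolding d_u_def exp_profile_def
    by (intro vector_derivative_at) (simp add: algebra_simps)
qed

lemma d_v_exp_profile: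
  assumes "(q has_vector_derivative q') (at (Im z))"
  shows "d_v (exp_profile l q) z = of_real (exp (- l * Re z)) * q'"
proof -
  have "((\<lambda>t. Im z + t) has_vector_derivative 1) (at 0)"
    by (intro derivative_eq_intros) auto
  from vector_diff_chain_at[OF this, of q] assms
  have "((\<lambda>t. q (Im z + t)) has_vector_derivative q') (at 0)"
    by (simp add: o_def)
  then show ?thesis unfolding d_v_def exp_profile_def
    by (intro vector_derivative_at) (simp add: has_vector_derivative_mult_right)
qed

lemma d_z_exp_profile:
  assumes "\<And>v. (q has_vector_derivative q' v) (at v)"
  shows "d_z (exp_profile l q) = exp_profile l (\<lambda>v. - (of_real l * q v + \<i> * q' v) / 2)"
  by (rule ext)
    (simp add: d_z_def d_u_exp_profile d_v_exp_profile[OF assms] exp_profile_def field_simps)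

lemma d_zbar_exp_profile:
  assumes "\<And>v. (q has_vector_derivative q' v) (at v)"
  shows "d_zbar (exp_profile l q) = exp_profile l (\<lambda>v. (\<i> * q' v - of_real l * q v) / 2)"
  by (rule ext)
    (simp add: d_zbar_def d_u_exp_profile d_v_exp_profile[OF assms] exp_profile_def field_simps)

lemma cnj_exp_profile: "(\<lambda>z. cnj (exp_profile l q z)) = exp_profile l (\<lambda>v. cnj (q v))"
  by (simp add: exp_profile_def fun_eq_iff)

lemma has_vector_derivative_cis:
  assumes "(f has_real_derivative f') (at x)"
  shows "((\<lambda>x. cis (f x)) has_vector_derivative \<i> * of_real f' * cis (f x)) (at x)"
  using has_derivative_cis[OF assms[unfolded has_field_derivative_def]]
  by (simp add: has_vector_derivative_def scaleR_conv_of_real mult.commute mult.left_commute)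

lemma wirtinger_derivatives_cis_profile:
  fixes l :: real and b B dB :: "real \<Rightarrow> real"
  assumes b: "\<And>v. (b has_real_derivative B v) (at v)"
    and B: "\<And>v. (B has_real_derivative dB v) (at v)"
  defines "g \<equiv> exp_profile l (\<lambda>v. cis (b v))"
  shows "d_z g = exp_profile l (\<lambda>v. of_real ((B v - l) / 2) * cis (b v))"
    and "d_zbar g = exp_profile l (\<lambda>v. - of_real ((B v + l) / 2) * cis (b v))"
    and "d_zbar (d_z g) =
      exp_profile l (\<lambda>v. (of_real (l\<^sup>2 - (B v)\<^sup>2) + \<i> * of_real (dB v)) / 4 * cis (b v))"
    and "d_z (\<lambda>z. cnj (g z)) = exp_profile l (\<lambda>v. - of_real ((B v + l) / 2) * cis (- b v))"
proof -
  note cis_b = has_vector_derivative_cis[OF b]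
  have cis_minus_b:
    "((\<lambda>v. cis (- b v)) has_vector_derivative - \<i> * of_real (B v) * cis (- b v)) (at v)" for v
    using has_vector_derivative_cis[OF DERIV_minus[OF b]] by simp
  have dz_profile: "((\<lambda>v. of_real ((B v - l) / 2) * cis (b v)) has_vector_derivative
      of_real ((B v - l) / 2) * (\<i> * of_real (B v) * cis (b v)) + of_real (dB v / 2) * cis (b v))
      (at v)" for v
  proof -
    have "((\<lambda>v. (B v - l) / 2) has_real_derivative dB v / 2) (at v)"
      by (auto intro!: derivative_eq_intros B)
    then show ?thesis
      by (rule has_vector_derivative_mult[OF has_vector_derivative_of_real cis_b])
  qed
  show dz: "d_z g = exp_profile l (\<lambda>v. of_real ((B v - l) / 2) * cis (b v))"
    unfolding g_def d_z_exp_profile[OF cis_b]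
    by (rule arg_cong[where f = "exp_profile l"]) (auto simp: fun_eq_iff field_simps)
  show "d_zbar g = exp_profile l (\<lambda>v. - of_real ((B v + l) / 2) * cis (b v))"
    unfolding g_def d_zbar_exp_profile[OF cis_b]
    by (rule arg_cong[where f = "exp_profile l"]) (auto simp: fun_eq_iff field_simps)
  show "d_zbar (d_z g) =
      exp_profile l (\<lambda>v. (of_real (l\<^sup>2 - (B v)\<^sup>2) + \<i> * of_real (dB v)) / 4 * cis (b v))"
    unfolding dz d_zbar_exp_profile[OF dz_profile]
    by (rule arg_cong[where f = "exp_profile l"]) (auto simp: fun_eq_iff field_simps power2_eq_square)
  show "d_z (\<lambda>z. cnj (g z)) = exp_profile l (\<lambda>v. - of_real ((B v + l) / 2) * cis (- b v))"
    unfolding g_def cnj_exp_profile cis_cnj d_z_exp_profile[OF cis_minus_b]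
    by (rule arg_cong[where f = "exp_profile l"]) (auto simp: fun_eq_iff field_simps)
qed

lemma sqrt_ode_second_derivative:
  fixes b F :: "real \<Rightarrow> real"
  assumes b: "(b has_real_derivative sqrt (F (b v))) (at v)"
    and F: "(F has_real_derivative F') (at (b v))" and pos: "0 < F (b v)"
  shows "((\<lambda>v. sqrt (F (b v))) has_real_derivative F' / 2) (at v)"
proof -
  have "((\<lambda>v. sqrt (F (b v))) has_real_derivative
      inverse (sqrt (F (b v))) / 2 * (F' * sqrt (F (b v)))) (at v)"
    by (rule DERIV_chain2[OF DERIV_real_sqrt[OF pos] DERIV_chain2[OF F b]])
  then show ?thesis
    using pos by (simp add: field_simps)
qed

lemma anisotropic_weight_bounds:
  fixes l1 l2 x :: real
  assumes "0 < l2" "l2 \<le> l1"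
  shows "0 < l1\<^sup>2 * (cos x)\<^sup>2 + l2\<^sup>2 * (sin x)\<^sup>2"
    and "l1\<^sup>2 * (cos x)\<^sup>2 + l2\<^sup>2 * (sin x)\<^sup>2 \<le> l1\<^sup>2"
proof -
  have "l2\<^sup>2 \<le> l1\<^sup>2"
    using assms by (simp add: power_mono)
  moreover have "l1\<^sup>2 = l1\<^sup>2 * (cos x)\<^sup>2 + l1\<^sup>2 * (sin x)\<^sup>2"
    and "l2\<^sup>2 = l2\<^sup>2 * (cos x)\<^sup>2 + l2\<^sup>2 * (sin x)\<^sup>2"
    by (simp_all flip: distrib_left)
  ultimately have "l2\<^sup>2 \<le> l1\<^sup>2 * (cos x)\<^sup>2 + l2\<^sup>2 * (sin x)\<^sup>2"
    and "l1\<^sup>2 * (cos x)\<^sup>2 + l2\<^sup>2 * (sin x)\<^sup>2 \<le> l1\<^sup>2"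
    using mult_right_mono[of "l2\<^sup>2" "l1\<^sup>2" "(cos x)\<^sup>2"] mult_right_mono[of "l2\<^sup>2" "l1\<^sup>2" "(sin x)\<^sup>2"]
    by simp_all
  then show "0 < l1\<^sup>2 * (cos x)\<^sup>2 + l2\<^sup>2 * (sin x)\<^sup>2"
    and "l1\<^sup>2 * (cos x)\<^sup>2 + l2\<^sup>2 * (sin x)\<^sup>2 \<le> l1\<^sup>2"
    using assms(1) by (auto intro: less_le_trans[of 0 "l2\<^sup>2"])
qed

lemma diff_mult_pos_of_abs_less_one:
  fixes K W L :: real
  assumes "0 < W" "W \<le> L" "\<bar>K\<bar> < 1"
  shows "0 < L - K * W"
proof -
  have "K * W \<le> \<bar>K\<bar> * W" using assms(1) by (simp add: mult_right_mono)
  also have "\<dots> < W" using assms(1,3) by simp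
  finally show ?thesis using assms(2) by simp
qed

lemma hopf_terms_polar:
  fixes l1 l2 r \<theta> :: real
  defines "g \<equiv> of_real r * cis \<theta>"
  shows "(of_real l1)\<^sup>2 * (g + cnj g) - (of_real l2)\<^sup>2 * (g - cnj g)
      = 2 * of_real r * Complex (l1\<^sup>2 * cos \<theta>) (- l2\<^sup>2 * sin \<theta>)"
    and "(of_real l1)\<^sup>2 * (g + cnj g)\<^sup>2 - (of_real l2)\<^sup>2 * (g - cnj g)\<^sup>2
      = of_real (4 * r\<^sup>2 * (l1\<^sup>2 * (cos \<theta>)\<^sup>2 + l2\<^sup>2 * (sin \<theta>)\<^sup>2))"
proof -
  have sum: "g + cnj g = of_real (2 * r * cos \<theta>)"
    and diff: "g - cnj g = \<i> * of_real (2 * r * sin \<theta>)"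
    by (simp_all add: g_def complex_eq_iff)
  show "(of_real l1)\<^sup>2 * (g + cnj g) - (of_real l2)\<^sup>2 * (g - cnj g)
      = 2 * of_real r * Complex (l1\<^sup>2 * cos \<theta>) (- l2\<^sup>2 * sin \<theta>)"
    unfolding sum diff by (simp add: complex_eq_iff algebra_simps)
  show "(of_real l1)\<^sup>2 * (g + cnj g)\<^sup>2 - (of_real l2)\<^sup>2 * (g - cnj g)\<^sup>2
      = of_real (4 * r\<^sup>2 * (l1\<^sup>2 * (cos \<theta>)\<^sup>2 + l2\<^sup>2 * (sin \<theta>)\<^sup>2))"
    unfolding sum diff by (simp add: power_mult_distrib algebra_simps)
qed

lemma wirtinger_equation_pointwise:
  fixes l1 l2 K r \<theta> B dB :: real
  assumes r_nz: "r \<noteq> 0"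
    and weight_nz: "l1\<^sup>2 * (cos \<theta>)\<^sup>2 + l2\<^sup>2 * (sin \<theta>)\<^sup>2 \<noteq> 0"
    and B_sq: "B\<^sup>2 = l1\<^sup>2 - K * (l1\<^sup>2 * (cos \<theta>)\<^sup>2 + l2\<^sup>2 * (sin \<theta>)\<^sup>2)"
    and dB_eq: "dB = K * (l1\<^sup>2 - l2\<^sup>2) * sin \<theta> * cos \<theta>"
  defines "g \<equiv> of_real r * cis \<theta>"
  shows "of_real r * ((of_real (l1\<^sup>2 - B\<^sup>2) + \<i> * of_real dB) / 4 * cis \<theta>)
      = 2 * ((of_real l1)\<^sup>2 * (g + cnj g) - (of_real l2)\<^sup>2 * (g - cnj g))
          / ((of_real l1)\<^sup>2 * (g + cnj g)\<^sup>2 - (of_real l2)\<^sup>2 * (g - cnj g)\<^sup>2)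
        * (of_real r * (of_real ((B - l1) / 2) * cis \<theta>))
        * (of_real r * (- of_real ((B + l1) / 2) * cis \<theta>))"
proof -
  define W where "W = l1\<^sup>2 * (cos \<theta>)\<^sup>2 + l2\<^sup>2 * (sin \<theta>)\<^sup>2"
  define P where "P = Complex (l1\<^sup>2 * cos \<theta>) (- l2\<^sup>2 * sin \<theta>)"
  have "W \<noteq> 0"
    using weight_nz by (simp add: W_def)
  have KW: "l1\<^sup>2 - B\<^sup>2 = K * W"
    using B_sq by (simp add: W_def)
  (* the numerator factor P, rotated by e^(i \<theta>), is the ODE data up to the factor K *)
  have "cis \<theta> * P = Complex W ((l1\<^sup>2 - l2\<^sup>2) * sin \<theta> * cos \<theta>)"
    by (simp add: P_def W_def complex_eq_iff algebra_simps power2_eq_square)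
  then have ode_data: "of_real (l1\<^sup>2 - B\<^sup>2) + \<i> * of_real dB = of_real K * (cis \<theta> * P)"
    by (simp add: KW dB_eq complex_eq_iff)
  have "of_real r * ((of_real (l1\<^sup>2 - B\<^sup>2) + \<i> * of_real dB) / 4 * cis \<theta>)
      = of_real r * cis \<theta> * (cis \<theta> * P) * of_real (l1\<^sup>2 - B\<^sup>2) / of_real (4 * W)"
    unfolding ode_data using \<open>W \<noteq> 0\<close> by (simp add: KW field_simps)
  also have "\<dots> = 2 * (2 * of_real r * P) / of_real (4 * r\<^sup>2 * W)
      * (of_real r * (of_real ((B - l1) / 2) * cis \<theta>))
      * (of_real r * (- of_real ((B + l1) / 2) * cis \<theta>))"
    using r_nz \<open>W \<noteq> 0\<close> by (simp add: field_simps power2_eq_square)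
  finally show ?thesis
    unfolding g_def hopf_terms_polar P_def W_def .
qed

lemma hopf_coefficient_pointwise:
  fixes l1 l2 K r \<theta> B :: real
  assumes r_nz: "r \<noteq> 0"
    and weight_nz: "l1\<^sup>2 * (cos \<theta>)\<^sup>2 + l2\<^sup>2 * (sin \<theta>)\<^sup>2 \<noteq> 0"
    and B_sq: "B\<^sup>2 = l1\<^sup>2 - K * (l1\<^sup>2 * (cos \<theta>)\<^sup>2 + l2\<^sup>2 * (sin \<theta>)\<^sup>2)"
  defines "g \<equiv> of_real r * cis \<theta>"
  shows "of_real r * (of_real ((B - l1) / 2) * cis \<theta>)
        * (of_real r * (- of_real ((B + l1) / 2) * cis (- \<theta>)))
        / ((of_real l1)\<^sup>2 * (g + cnj g)\<^sup>2 - (of_real l2)\<^sup>2 * (g - cnj g)\<^sup>2)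
      = of_real (K / 16)"
proof -
  define W where "W = l1\<^sup>2 * (cos \<theta>)\<^sup>2 + l2\<^sup>2 * (sin \<theta>)\<^sup>2"
  have "W \<noteq> 0"
    using weight_nz by (simp add: W_def)
  have KW: "l1\<^sup>2 - B\<^sup>2 = K * W"
    using B_sq by (simp add: W_def)
  have "of_real r * (of_real ((B - l1) / 2) * cis \<theta>)
      * (of_real r * (- of_real ((B + l1) / 2) * cis (- \<theta>)))
      = of_real (r * ((B - l1) / 2) * (r * (- (B + l1) / 2))) * (cis \<theta> * cis (- \<theta>))"
    by (simp add: field_simps)
  also have "\<dots> = of_real (r\<^sup>2 * (K * W) / 4)"
    unfolding KW[symmetric] by (simp add: cis_mult field_simps power2_eq_square)
  finally have numerator: "of_real r * (of_real ((B - l1) / 2) * cis \<theta>)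
      * (of_real r * (- of_real ((B + l1) / 2) * cis (- \<theta>))) = of_real (r\<^sup>2 * (K * W) / 4)" .
  show ?thesis
    unfolding numerator g_def hopf_terms_polar W_def[symmetric]
      of_real_divide[symmetric] of_real_eq_iff
    using r_nz \<open>W \<noteq> 0\<close> by (simp add: field_simps)
qed

theorem proposition4p2:
  fixes l1 l2 K :: real and b :: "real \<Rightarrow> real" and g :: "complex \<Rightarrow> complex"
  assumes lam: "(l1 > l2 \<and> l2 > 0) \<or> (l1 = 1 \<and> l2 = 1)"
    and K: "-1 < K" "K < 1"
    and b_ode: "\<And>v. (b has_real_derivative
         sqrt (l1\<^sup>2 - K * (l1\<^sup>2 * (cos (b v))\<^sup>2 + l2\<^sup>2 * (sin (b v))\<^sup>2))) (at v)"
    and b0: "b 0 = 0"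
    and g_def: "\<And>z. g z = exp (complex_of_real (- l1 * Re z)) * exp (\<i> * complex_of_real (b (Im z)))"
  shows "(\<forall>z. d_zbar (d_z g) z =
           2 * ((complex_of_real l1)\<^sup>2 * (g z + cnj (g z)) - (complex_of_real l2)\<^sup>2 * (g z - cnj (g z)))
           / ((complex_of_real l1)\<^sup>2 * (g z + cnj (g z))\<^sup>2 - (complex_of_real l2)\<^sup>2 * (g z - cnj (g z))\<^sup>2)
           * d_z g z * d_zbar g z)
     \<and> (\<forall>z. hopf_coeff l1 l2 g z = complex_of_real (K / 16))"
proof -
  define F where "F x = l1\<^sup>2 - K * (l1\<^sup>2 * (cos x)\<^sup>2 + l2\<^sup>2 * (sin x)\<^sup>2)" for x
  define B where "B v = sqrt (F (b v))" for v
  define dB where "dB v = K * (l1\<^sup>2 - l2\<^sup>2) * sin (b v) * cos (b v)" for v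
  have l2: "0 < l2" "l2 \<le> l1"
    using lam by auto
  note weight_bounds = anisotropic_weight_bounds[OF l2]
  have F_pos: "0 < F x" for x
    unfolding F_def using weight_bounds K by (intro diff_mult_pos_of_abs_less_one) auto
  have b': "(b has_real_derivative B v) (at v)" for v
    using b_ode unfolding B_def F_def .
  have B': "(B has_real_derivative dB v) (at v)" for v
  proof -
    have "(F has_real_derivative 2 * dB v) (at (b v))"
      unfolding F_def dB_def by (auto intro!: derivative_eq_intros simp: algebra_simps power2_eq_square)
    from sqrt_ode_second_derivative[OF b'[unfolded B_def] this F_pos]
    show ?thesis unfolding B_def by simp
  qed
  have B_sq: "(B v)\<^sup>2 = l1\<^sup>2 - K * (l1\<^sup>2 * (cos (b v))\<^sup>2 + l2\<^sup>2 * (sin (b v))\<^sup>2)" for v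
    using F_pos unfolding B_def F_def by (simp add: less_imp_le)
  have g_eq: "g = exp_profile l1 (\<lambda>v. cis (b v))"
    by (rule ext) (simp only: g_def exp_profile_def exp_of_real cis_conv_exp)
  note derivs = wirtinger_derivatives_cis_profile[OF b' B', of l1]
  note weight_nz = weight_bounds(1)[THEN less_imp_neq, THEN not_sym]
  (* derivs(3,4) have to rewrite before derivs(1) rewrites the inner d_z *)
  show ?thesis
    unfolding hopf_coeff_def g_eq derivs(3,4) unfolding derivs(1,2) exp_profile_def
    using wirtinger_equation_pointwise[OF exp_not_eq_zero weight_nz B_sq dB_def]
      hopf_coefficient_pointwise[OF exp_not_eq_zero weight_nz B_sq]
    by blast
qed

end
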